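(* Let $f^*\in L^2(\mathcal D)$ with $\mathbb E_{x\sim\mathcal D}[f^*(x)^2]\le1$. Let $f_{\mathrm{teacher}}$ be any function that is shrinkage-optimal with respect to $f^*$, and let $f_{\mathrm{student}}$ be any function that is shrinkage-optimal with respect to $f_{\mathrm{teacher}}$. Let $\mathcal L_{TE}=\mathbb E_x[(f_{\mathrm{teacher}}(x)-f^*(x))^2]$ and $\mathcal L_{ST}=\mathbb E_x[(f_{\mathrm{student}}(x)-f^*(x))^2]$. Then $$\mathcal L_{ST}\ \ge\ \frac{\big(\sqrt{1+3\mathcal L_{TE}}-\sqrt{1-\mathcal L_{TE}}\big)^2}{4}\ \ge\ \frac34\,\mathcal L_{TE}^2 .$$
   Context: $\mathcal D$ is a probability distribution on an input space $\mathcal X$; $\langle f,g\rangle_{\mathcal D}=\mathbb E_{x\sim\mathcal D}[f(x)g(x)]$. Shrinkage optimality: given $\hat f,f_{\mathrm{train}}:\mathcal X\to\mathbb R$, $\hat f$ is shrinkage-optimal with respect to $f_{\mathrm{train}}$ if for every $0\le\alpha\le1$, $\mathbb E_x[(\hat f(x)-f_{\mathrm{train}}(x))^2]\le\mathbb E_x[(\alpha\hat f(x)-f_{\mathrm{train}}(x))^2]$. All functions are in $L^2(\mathcal D)$. *)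

theory Defs
  imports "HOL-Probability.Probability"
begin

definition L2 :: "'a measure \<Rightarrow> ('a \<Rightarrow> real) \<Rightarrow> bool" where
  "L2 M f \<longleftrightarrow> f \<in> borel_measurable M \<and> integrable M (\<lambda>x. (f x)\<^sup>2)"

definition shrinkage_optimal ::
  "'a measure \<Rightarrow> ('a \<Rightarrow> real) \<Rightarrow> ('a \<Rightarrow> real) \<Rightarrow> bool" where
  "shrinkage_optimal M fhat ftrain \<longleftrightarrow>
     (\<forall>\<alpha>::real. 0 \<le> \<alpha> \<and> \<alpha> \<le> 1 \<longrightarrow>
        (\<integral>x. (fhat x - ftrain x)\<^sup>2 \<partial>M) \<le> (\<integral>x. (\<alpha> * fhat x - ftrain x)\<^sup>2 \<partial>M))"

end

theory Submission
  imports Defs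
begin

text \<open>Shrinkage optimality of \<open>f\<close> for \<open>g\<close> amounts to \<open>\<langle>f, g\<rangle> \<ge> \<parallel>f\<parallel>\<^sup>2\<close>: \<open>f\<close> lies in the closed
  ball with centre \<open>g / 2\<close> and radius \<open>\<parallel>g\<parallel> / 2\<close>. So the student is at distance at least
  \<open>\<parallel>f\<^sup>* - t / 2\<parallel> - \<parallel>t\<parallel> / 2\<close> from \<open>f\<^sup>*\<close>, where \<open>t\<close> is the teacher. Keeping the teacher's loss
  \<open>L = \<parallel>t - f\<^sup>*\<parallel>\<^sup>2\<close> fixed and using \<open>\<langle>t, f\<^sup>*\<rangle> \<ge> \<parallel>t\<parallel>\<^sup>2\<close>, this distance is smallest when
  \<open>\<langle>t, f\<^sup>*\<rangle> = \<parallel>t\<parallel>\<^sup>2\<close> and \<open>\<parallel>f\<^sup>*\<parallel> = 1\<close>, where it equals \<open>(\<surd>(1 + 3 L) - \<surd>(1 - L)) / 2\<close>.\<close>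

lemma quadratic_form_nonneg_imp_discriminant_le:
  fixes A B C :: real
  assumes nonneg: "\<And>l m. 0 \<le> l\<^sup>2 * A - 2 * l * m * B + m\<^sup>2 * C"
  shows "B\<^sup>2 \<le> A * C"
proof (cases "A = 0")
  case True
  show ?thesis
  proof (rule ccontr)
    assume "\<not> ?thesis"
    with True have "B \<noteq> 0" by simp
    have "0 \<le> ((C + 1) / (2 * B))\<^sup>2 * A - 2 * ((C + 1) / (2 * B)) * 1 * B + 1\<^sup>2 * C"
      by (rule nonneg)
    also have "\<dots> = -1" using True \<open>B \<noteq> 0\<close> by (simp add: field_simps)
    finally show False by simp
  qed
next
  case False
  moreover have "A \<ge> 0" using nonneg[of 1 0] by simp
  moreover have "0 \<le> A * (A * C - B\<^sup>2)"
    using nonneg[of B A] by (simp add: power2_eq_square algebra_simps)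
  ultimately show ?thesis by (simp add: zero_le_mult_iff)
qed

text \<open>If the quadratic \<open>\<alpha>\<^sup>2 T - 2 \<alpha> a\<close> is minimised on \<open>[0, 1]\<close> at \<open>\<alpha> = 1\<close>, then testing
  \<open>\<alpha> = 0\<close> gives \<open>a \<ge> 0\<close> and testing the vertex \<open>\<alpha> = a / T\<close> gives \<open>(T - a)\<^sup>2 \<le> 0\<close> unless \<open>a \<ge> T\<close>.\<close>
lemma quadratic_min_at_one_imp_ge:
  fixes T a :: real
  assumes min: "\<And>\<alpha>. 0 \<le> \<alpha> \<Longrightarrow> \<alpha> \<le> 1 \<Longrightarrow> T - 2 * a \<le> \<alpha>\<^sup>2 * T - 2 * \<alpha> * a"
    and "T \<ge> 0"
  shows "T \<le> a"
proof (rule ccontr)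
  assume "\<not> T \<le> a"
  moreover have "a \<ge> 0" using min[of 0] \<open>T \<ge> 0\<close> by simp
  ultimately have "T > 0" "0 \<le> a / T" "a / T \<le> 1" by auto
  have "T - 2 * a \<le> (a / T)\<^sup>2 * T - 2 * (a / T) * a"
    using min \<open>0 \<le> a / T\<close> \<open>a / T \<le> 1\<close> .
  with \<open>T > 0\<close> have "(T - a)\<^sup>2 \<le> 0" by (simp add: power2_eq_square field_simps)
  with \<open>\<not> T \<le> a\<close> show False by simp
qed

lemma sqrt_add_diff_antimono:
  fixes x y c :: real
  assumes "0 \<le> x" "x \<le> y" "0 \<le> c"
  shows "sqrt (y + c) - sqrt y \<le> sqrt (x + c) - sqrt x"
proof -
  have "(sqrt (y + c) + sqrt x)\<^sup>2 \<le> (sqrt (x + c) + sqrt y)\<^sup>2"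
  proof -
    have "(y + c) * x \<le> (x + c) * y" using assms by (simp add: algebra_simps mult_left_mono)
    hence "sqrt ((y + c) * x) \<le> sqrt ((x + c) * y)" by simp
    thus ?thesis using assms by (simp add: power2_sum real_sqrt_mult)
  qed
  hence "sqrt (y + c) + sqrt x \<le> sqrt (x + c) + sqrt y"
    by (rule power2_le_imp_le) (use assms in \<open>auto intro!: add_nonneg_nonneg\<close>)
  thus ?thesis by simp
qed

text \<open>With \<open>L = T - 2 a + Y\<close> fixed, the left-hand side is the value of the right-hand side in
  the extremal case \<open>a = T = Y - L\<close>, \<open>Y = 1\<close>.\<close>
lemma center_minus_radius_ge:
  fixes T a Y L :: real
  assumes "0 \<le> T" "T \<le> a" "L = T - 2 * a + Y" "0 \<le> L" "Y \<le> 1"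
  shows "(sqrt (1 + 3 * L) - sqrt (1 - L)) / 2 \<le> sqrt (Y - a + T / 4) - sqrt T / 2"
proof -
  have "L \<le> Y - T" using assms by simp
  hence "sqrt (1 + 3 * L) - sqrt (1 - L) \<le> sqrt (Y + 3 * L) - sqrt (Y - L)"
    using sqrt_add_diff_antimono[of "Y - L" "1 - L" "4 * L"] \<open>0 \<le> T\<close> \<open>0 \<le> L\<close> \<open>Y \<le> 1\<close>
    by (simp add: algebra_simps)
  moreover have "sqrt (Y + 3 * L) \<le> 2 * sqrt (Y - a + T / 4)"
    using assms by (intro real_le_lsqrt) (simp_all add: power_mult_distrib)
  moreover have "sqrt T \<le> sqrt (Y - L)" using assms by simp
  ultimately have "sqrt (1 + 3 * L) - sqrt (1 - L) \<le> 2 * sqrt (Y - a + T / 4) - sqrt T" by linarith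
  thus ?thesis by simp
qed

lemma sqrt_gap_square_ge:
  fixes L :: real
  assumes "0 \<le> L" "L \<le> 1"
  shows "3 / 4 * L\<^sup>2 \<le> (sqrt (1 + 3 * L) - sqrt (1 - L))\<^sup>2 / 4"
proof -
  define A B where "A = sqrt (1 + 3 * L)" and "B = sqrt (1 - L)"
  have A2: "A\<^sup>2 = 1 + 3 * L" and B2: "B\<^sup>2 = 1 - L" using assms by (simp_all add: A_def B_def)
  have "(A + B)\<^sup>2 \<le> 16 / 3"
    using A2 B2 zero_le_power2[of "A - 3 * B"] by (simp add: power2_eq_square algebra_simps)
  hence "(A + B)\<^sup>2 * (A - B)\<^sup>2 \<le> 16 / 3 * (A - B)\<^sup>2" by (rule mult_right_mono) simp
  moreover have "(A + B) * (A - B) = 4 * L" using A2 B2 by (simp add: power2_eq_square algebra_simps)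
  hence "(A + B)\<^sup>2 * (A - B)\<^sup>2 = 16 * L\<^sup>2" by (simp flip: power_mult_distrib)
  ultimately have "3 / 4 * L\<^sup>2 \<le> (A - B)\<^sup>2 / 4" by linarith
  thus ?thesis by (simp only: A_def B_def)
qed

lemma L2_integrable_mult:
  assumes "L2 M f" "L2 M g"
  shows "integrable M (\<lambda>x. f x * g x)"
proof (rule Bochner_Integration.integrable_bound)
  show "integrable M (\<lambda>x. (f x)\<^sup>2 + (g x)\<^sup>2)" using assms unfolding L2_def by auto
  show "(\<lambda>x. f x * g x) \<in> borel_measurable M" using assms unfolding L2_def by auto
  have "\<bar>f x * g x\<bar> \<le> (f x)\<^sup>2 + (g x)\<^sup>2" for x
  proof -
    have "2 * \<bar>f x * g x\<bar> \<le> (f x)\<^sup>2 + (g x)\<^sup>2"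
      using zero_le_power2[of "\<bar>f x\<bar> - \<bar>g x\<bar>"] by (simp add: abs_mult power2_eq_square algebra_simps)
    thus ?thesis using abs_ge_zero[of "f x * g x"] by linarith
  qed
  thus "AE x in M. norm (f x * g x) \<le> norm ((f x)\<^sup>2 + (g x)\<^sup>2)" by simp
qed

lemma L2_cmult: "L2 M f \<Longrightarrow> L2 M (\<lambda>x. c * f x)"
  unfolding L2_def by (auto simp: power_mult_distrib)

lemma L2_diff:
  assumes "L2 M f" "L2 M g"
  shows "L2 M (\<lambda>x. f x - g x)"
proof -
  have "(\<lambda>x. (f x - g x)\<^sup>2) = (\<lambda>x. (f x)\<^sup>2 - 2 * (f x * g x) + (g x)\<^sup>2)"
    by (simp add: power2_eq_square algebra_simps)
  thus ?thesis using assms L2_integrable_mult[OF assms] unfolding L2_def by auto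
qed

lemma integral_square_diff:
  assumes "L2 M f" "L2 M g"
  shows "(\<integral>x. (f x - g x)\<^sup>2 \<partial>M)
    = (\<integral>x. (f x)\<^sup>2 \<partial>M) - 2 * (\<integral>x. f x * g x \<partial>M) + (\<integral>x. (g x)\<^sup>2 \<partial>M)"
proof -
  have "(\<lambda>x. (f x - g x)\<^sup>2) = (\<lambda>x. (f x)\<^sup>2 - 2 * (f x * g x) + (g x)\<^sup>2)"
    by (simp add: power2_eq_square algebra_simps)
  thus ?thesis using assms L2_integrable_mult[OF assms] unfolding L2_def by simp
qed

lemma L2_Cauchy_Schwarz:
  assumes "L2 M f" "L2 M g"
  shows "(\<integral>x. f x * g x \<partial>M)\<^sup>2 \<le> (\<integral>x. (f x)\<^sup>2 \<partial>M) * (\<integral>x. (g x)\<^sup>2 \<partial>M)"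
proof (rule quadratic_form_nonneg_imp_discriminant_le)
  fix l m :: real
  have "0 \<le> (\<integral>x. (l * f x - m * g x)\<^sup>2 \<partial>M)" by simp
  also have "\<dots> = l\<^sup>2 * (\<integral>x. (f x)\<^sup>2 \<partial>M) - 2 * l * m * (\<integral>x. f x * g x \<partial>M)
      + m\<^sup>2 * (\<integral>x. (g x)\<^sup>2 \<partial>M)"
    using integral_square_diff[OF L2_cmult L2_cmult, OF assms]
    by (simp add: power_mult_distrib ac_simps)
  finally show "0 \<le> \<dots>" .
qed

lemma L2_reverse_triangle:
  assumes "L2 M f" "L2 M g"
  shows "sqrt (\<integral>x. (g x)\<^sup>2 \<partial>M) - sqrt (\<integral>x. (f x)\<^sup>2 \<partial>M) \<le> sqrt (\<integral>x. (f x - g x)\<^sup>2 \<partial>M)"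
proof -
  define F G c where "F = (\<integral>x. (f x)\<^sup>2 \<partial>M)" and "G = (\<integral>x. (g x)\<^sup>2 \<partial>M)"
    and "c = (\<integral>x. f x * g x \<partial>M)"
  have "F \<ge> 0" "G \<ge> 0" by (simp_all add: F_def G_def)
  have "c \<le> sqrt (c\<^sup>2)" by simp
  also have "\<dots> \<le> sqrt (F * G)"
    using real_sqrt_le_mono[OF L2_Cauchy_Schwarz[OF assms]] by (simp add: F_def G_def c_def)
  finally have "(sqrt G - sqrt F)\<^sup>2 \<le> F - 2 * c + G"
    using \<open>F \<ge> 0\<close> \<open>G \<ge> 0\<close> by (simp add: power2_diff real_sqrt_mult ac_simps)
  hence "\<bar>sqrt G - sqrt F\<bar> \<le> sqrt (F - 2 * c + G)" using real_sqrt_le_mono by fastforce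
  thus ?thesis using integral_square_diff[OF assms] by (simp add: F_def G_def c_def)
qed

lemma shrinkage_optimal_imp_inner_ge:
  assumes "L2 M f" "L2 M g" "shrinkage_optimal M f g"
  shows "(\<integral>x. (f x)\<^sup>2 \<partial>M) \<le> (\<integral>x. f x * g x \<partial>M)"
proof (rule quadratic_min_at_one_imp_ge)
  fix \<alpha> :: real
  assume "0 \<le> \<alpha>" "\<alpha> \<le> 1"
  have "\<And>\<alpha>. (\<integral>x. (\<alpha> * f x - g x)\<^sup>2 \<partial>M) = \<alpha>\<^sup>2 * (\<integral>x. (f x)\<^sup>2 \<partial>M)
      - 2 * \<alpha> * (\<integral>x. f x * g x \<partial>M) + (\<integral>x. (g x)\<^sup>2 \<partial>M)"
    using integral_square_diff[OF L2_cmult assms(2), OF assms(1)]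
    by (simp add: power_mult_distrib ac_simps)
  from this[of \<alpha>] this[of 1] assms(3) \<open>0 \<le> \<alpha>\<close> \<open>\<alpha> \<le> 1\<close>
  show "(\<integral>x. (f x)\<^sup>2 \<partial>M) - 2 * (\<integral>x. f x * g x \<partial>M)
      \<le> \<alpha>\<^sup>2 * (\<integral>x. (f x)\<^sup>2 \<partial>M) - 2 * \<alpha> * (\<integral>x. f x * g x \<partial>M)"
    unfolding shrinkage_optimal_def by fastforce
qed simp

lemma shrinkage_optimal_imp_in_ball:
  assumes "L2 M f" "L2 M g" "shrinkage_optimal M f g"
  shows "sqrt (\<integral>x. (f x - g x / 2)\<^sup>2 \<partial>M) \<le> sqrt (\<integral>x. (g x)\<^sup>2 \<partial>M) / 2"
proof -
  have "(\<integral>x. (f x - g x / 2)\<^sup>2 \<partial>M)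
      = (\<integral>x. (f x)\<^sup>2 \<partial>M) - (\<integral>x. f x * g x \<partial>M) + (\<integral>x. (g x)\<^sup>2 \<partial>M) / 4"
    using integral_square_diff[OF assms(1) L2_cmult[OF assms(2), of "1/2"]]
    by (simp add: power_divide ac_simps)
  also have "\<dots> \<le> (\<integral>x. (g x)\<^sup>2 \<partial>M) / 4"
    using shrinkage_optimal_imp_inner_ge[OF assms] by simp
  finally have "sqrt (\<integral>x. (f x - g x / 2)\<^sup>2 \<partial>M) \<le> sqrt ((\<integral>x. (g x)\<^sup>2 \<partial>M) / 4)"
    by (rule real_sqrt_le_mono)
  thus ?thesis by (simp add: real_sqrt_divide)
qed

lemma shrinkage_optimal_dist_ge:
  assumes "L2 M f" "L2 M g" "L2 M h" "shrinkage_optimal M f g"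
  shows "sqrt (\<integral>x. (h x - g x / 2)\<^sup>2 \<partial>M) - sqrt (\<integral>x. (g x)\<^sup>2 \<partial>M) / 2
    \<le> sqrt (\<integral>x. (f x - h x)\<^sup>2 \<partial>M)"
proof -
  have half: "L2 M (\<lambda>x. g x / 2)" using L2_cmult[OF assms(2), of "1/2"] by simp
  have "sqrt (\<integral>x. (h x - g x / 2)\<^sup>2 \<partial>M) - sqrt (\<integral>x. (f x - g x / 2)\<^sup>2 \<partial>M)
      \<le> sqrt (\<integral>x. (f x - h x)\<^sup>2 \<partial>M)"
    using L2_reverse_triangle[OF L2_diff[OF assms(1) half] L2_diff[OF assms(3) half]] by simp
  with shrinkage_optimal_imp_in_ball[OF assms(1,2,4)] show ?thesis by simp
qed

text \<open>The argument never uses that \<open>M\<close> is a probability measure.\<close>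
theorem theorem4p3:
  fixes M :: "'a measure" and fstar fteacher fstudent :: "'a \<Rightarrow> real"
  assumes "prob_space M"
    and "L2 M fstar" and "L2 M fteacher" and "L2 M fstudent"
    and "(\<integral>x. (fstar x)\<^sup>2 \<partial>M) \<le> 1"
    and "shrinkage_optimal M fteacher fstar"
    and "shrinkage_optimal M fstudent fteacher"
  shows "let LTE = (\<integral>x. (fteacher x - fstar x)\<^sup>2 \<partial>M);
             LST = (\<integral>x. (fstudent x - fstar x)\<^sup>2 \<partial>M)
         in LST \<ge> (sqrt (1 + 3 * LTE) - sqrt (1 - LTE))\<^sup>2 / 4
            \<and> (sqrt (1 + 3 * LTE) - sqrt (1 - LTE))\<^sup>2 / 4 \<ge> 3 / 4 * LTE\<^sup>2"
proof -
  define T Y a where "T = (\<integral>x. (fteacher x)\<^sup>2 \<partial>M)" and "Y = (\<integral>x. (fstar x)\<^sup>2 \<partial>M)"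
    and "a = (\<integral>x. fteacher x * fstar x \<partial>M)"
  define LTE LST where "LTE = (\<integral>x. (fteacher x - fstar x)\<^sup>2 \<partial>M)"
    and "LST = (\<integral>x. (fstudent x - fstar x)\<^sup>2 \<partial>M)"
  define gap where "gap = sqrt (1 + 3 * LTE) - sqrt (1 - LTE)"
  have LTE_eq: "LTE = T - 2 * a + Y"
    unfolding LTE_def T_def Y_def a_def by (rule integral_square_diff[OF assms(3,2)])
  have "T \<le> a" unfolding T_def a_def by (rule shrinkage_optimal_imp_inner_ge[OF assms(3,2,6)])
  have "0 \<le> LTE" "0 \<le> T" by (simp_all add: LTE_def T_def)
  have "LTE \<le> 1" using LTE_eq \<open>T \<le> a\<close> \<open>0 \<le> T\<close> assms(5) by (simp add: Y_def)
  have center: "(\<integral>x. (fstar x - fteacher x / 2)\<^sup>2 \<partial>M) = Y - a + T / 4"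
    using integral_square_diff[OF assms(2) L2_cmult[OF assms(3), of "1/2"]]
    by (simp add: T_def Y_def a_def power_divide ac_simps)
  have "gap / 2 \<le> sqrt (\<integral>x. (fstar x - fteacher x / 2)\<^sup>2 \<partial>M) - sqrt T / 2"
    unfolding gap_def center
    by (rule center_minus_radius_ge[OF \<open>0 \<le> T\<close> \<open>T \<le> a\<close> LTE_eq \<open>0 \<le> LTE\<close>])
      (use assms(5) Y_def in simp)
  also have "\<dots> \<le> sqrt LST"
    unfolding T_def LST_def by (rule shrinkage_optimal_dist_ge[OF assms(4,3,2,7)])
  finally have "(gap / 2)\<^sup>2 \<le> (sqrt LST)\<^sup>2"
    using \<open>0 \<le> LTE\<close> by (intro power_mono) (simp_all add: gap_def)
  hence "(gap / 2)\<^sup>2 \<le> LST" by (simp add: LST_def)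
  with sqrt_gap_square_ge[OF \<open>0 \<le> LTE\<close> \<open>LTE \<le> 1\<close>] show ?thesis
    unfolding Let_def LTE_def LST_def gap_def by (simp add: power_divide)
qed

end
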